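(* Let $f:\mathbb{R}^p\to\mathbb{R}$ be twice differentiable, let $k^*$ be a positive integer and $\vec w^*=\arg\min_{\vec w:\ \|\vec w\|_0^{\mathcal{G}}\le k^*}f(\vec w)$. Let $k'=2k+k^*$, where $k=O\!\left(\left(\frac{L_{k'}}{\alpha_{k'}}\right)^2k^*\right)$, and suppose $f$ satisfies RSC/RSS of order $k'$ with constants $\alpha_{k'},L_{k'}$. Run the IHT algorithm with step size $\eta=1/L_{k'}$ and with the exact projection $P_k^{\mathcal{G}}$. Then for $\epsilon>0$, the iterate $\vec w_T$ with $T=O\!\left(\frac{L_{k'}}{\alpha_{k'}}\cdot\frac{\|\vec w^*\|_2}{\epsilon}\right)$ satisfies \[ \|\vec w_T-\vec w^*\|_2\le\epsilon+\frac{10L_{k'}}{\alpha_{k'}}\gamma,\qquad \gamma=\frac{2}{L_{k'}}\max_{S:\ |\operatorname{G-supp}(S)|\le k}\|(\nabla f(\vec w^* ))_S\|_2. \]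
   Context: Groups $\mathcal{G}=\{G_1,\dots,G_M\}$, $G_i\subseteq[p]$, $\bigcup_iG_i=[p]$. For $S\subseteq[p]$, $\vec v_S$ agrees with $\vec v$ on $S$ and is $0$ elsewhere. $\|\vec w\|_0^{\mathcal{G}}$ is the minimum number of nonzero terms in a decomposition $\vec w=\sum_i\vec a_{G_i}$ with $\operatorname{supp}(\vec a_{G_i})\subseteq G_i$ (the minimum number of groups covering $\operatorname{supp}(\vec w)$); $|\operatorname{G-supp}(S)|$ is the minimum number of groups whose union covers $S$. RSC/RSS of order $k$ with constants $\alpha_k,L_k$: $\alpha_kI\preceq\nabla^2f(\vec w)\preceq L_kI$ for all $\vec w$ with $\|\vec w\|_0^{\mathcal{G}}\le k$. Exact projection: $P_k^{\mathcal{G}}(\vec g)=\arg\min_{\vec w}\|\vec w-\vec g\|_2^2$ subject to $\|\vec w\|_0^{\mathcal{G}}\le k$. IHT algorithm: start from a $k$-group sparse $\vec w_0$ and iterate $\vec w_{t+1}=P_k^{\mathcal{G}}(\vec w_t-\eta\nabla f(\vec w_t))$. *)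

theory Defs
  imports "HOL-Analysis.Analysis"
begin

text \<open>Vectors of R^p are modelled as functions nat => real vanishing outside {..<p}
  (so that the dimension p is an ordinary variable and the hidden O-constants can be
  quantified independently of p). Topology on nat => real is the product topology
  (HOL-Analysis Function_Topology), which on R^p is the Euclidean topology.\<close>

definition Rp :: "nat \<Rightarrow> (nat \<Rightarrow> real) set" where
  "Rp p = {v. \<forall>i. p \<le> i \<longrightarrow> v i = 0}"

definition l2 :: "nat \<Rightarrow> (nat \<Rightarrow> real) \<Rightarrow> real" where
  "l2 p v = sqrt (\<Sum>i<p. (v i)\<^sup>2)"

definition restr :: "nat set \<Rightarrow> (nat \<Rightarrow> real) \<Rightarrow> (nat \<Rightarrow> real)" where
  "restr S v = (\<lambda>i. if i \<in> S then v i else 0)"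

definition gsupp_card :: "(nat \<Rightarrow> nat set) \<Rightarrow> nat \<Rightarrow> nat set \<Rightarrow> nat" where
  "gsupp_card G M S = (LEAST m. \<exists>I. I \<subseteq> {..<M} \<and> card I = m \<and> S \<subseteq> (\<Union>i\<in>I. G i))"

definition gnorm0 :: "(nat \<Rightarrow> nat set) \<Rightarrow> nat \<Rightarrow> (nat \<Rightarrow> real) \<Rightarrow> nat" where
  "gnorm0 G M w = gsupp_card G M {i. w i \<noteq> 0}"

definition twice_diff_grad_hess ::
  "nat \<Rightarrow> ((nat \<Rightarrow> real) \<Rightarrow> real) \<Rightarrow> ((nat \<Rightarrow> real) \<Rightarrow> (nat \<Rightarrow> real))
     \<Rightarrow> ((nat \<Rightarrow> real) \<Rightarrow> nat \<Rightarrow> nat \<Rightarrow> real) \<Rightarrow> bool" where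
  "twice_diff_grad_hess p f g H \<longleftrightarrow>
     (\<forall>w\<in>Rp p. g w \<in> Rp p \<and>
        ((\<lambda>h. (f (\<lambda>i. w i + h i) - f w - (\<Sum>i<p. g w i * h i)) / l2 p h) \<longlongrightarrow> 0)
           (at (\<lambda>_. 0) within Rp p) \<and>
        (\<forall>i<p. ((\<lambda>h. (g (\<lambda>j. w j + h j) i - g w i - (\<Sum>j<p. H w i j * h j)) / l2 p h)
                   \<longlongrightarrow> 0) (at (\<lambda>_. 0) within Rp p)))"

definition rsc_rss ::
  "nat \<Rightarrow> (nat \<Rightarrow> nat set) \<Rightarrow> nat \<Rightarrow> ((nat \<Rightarrow> real) \<Rightarrow> nat \<Rightarrow> nat \<Rightarrow> real)
     \<Rightarrow> nat \<Rightarrow> real \<Rightarrow> real \<Rightarrow> bool" where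
  "rsc_rss p G M H k \<alpha> L \<longleftrightarrow>
     (\<forall>w\<in>Rp p. gnorm0 G M w \<le> k \<longrightarrow>
        (\<forall>v\<in>Rp p. \<alpha> * (l2 p v)\<^sup>2 \<le> (\<Sum>i<p. \<Sum>j<p. v i * H w i j * v j) \<and>
                   (\<Sum>i<p. \<Sum>j<p. v i * H w i j * v j) \<le> L * (l2 p v)\<^sup>2))"

text \<open>Exact projection P_k^G(g): the set of all minimizers (any of them may be chosen).\<close>
definition proj_set ::
  "nat \<Rightarrow> (nat \<Rightarrow> nat set) \<Rightarrow> nat \<Rightarrow> nat \<Rightarrow> (nat \<Rightarrow> real) \<Rightarrow> (nat \<Rightarrow> real) set" where
  "proj_set p G M k v = {w \<in> Rp p. gnorm0 G M w \<le> k \<and>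
      (\<forall>u\<in>Rp p. gnorm0 G M u \<le> k \<longrightarrow>
          (l2 p (\<lambda>i. w i - v i))\<^sup>2 \<le> (l2 p (\<lambda>i. u i - v i))\<^sup>2)}"

end

theory Submission
  imports Defs
begin

(* One IHT step from x, with z = x - \<nabla>f(x)/L and P the projection of z, is analysed on the
   union S of the groups supporting x, P and wstar (at most 2k + kstar groups), where the
   RSC/RSS bounds apply. Restricted strong convexity and co-coercivity make the gradient step
   a contraction on S: |(x - wstar - (\<nabla>f(x) - \<nabla>f(wstar))/L)_S|^2 <= (1 - \<alpha>/L) |x - wstar|^2.
   The exact projection keeps z on the union C of at most k groups, and the mass of z on the
   groups of wstar that it misses is at most kstar/(k - kstar) times its mass on C outside
   them: otherwise dropping some groups of C in favour of those of wstar would beat the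
   projection. With k >= 73 (L/\<alpha>)^2 kstar this gives
   |P - wstar|^2 <= (1 - \<alpha>/4L) |x - wstar|^2 + 15 \<Gamma>^2/(\<alpha> L),
   where \<Gamma> bounds the gradient at wstar on k groups, and iterating from 0 for
   T >= 8 (L/\<alpha>) |wstar|/\<epsilon> steps yields the claim. *)

lemma l2_nonneg: "0 \<le> l2 p v"
  unfolding l2_def by (simp add: sum_nonneg)

lemma l2_squared: "(l2 p v)\<^sup>2 = (\<Sum>i<p. (v i)\<^sup>2)"
  unfolding l2_def by (simp add: sum_nonneg)

lemma l2_scale: "l2 p (\<lambda>i. s * h i) = \<bar>s\<bar> * l2 p h"
proof -
  have "(\<Sum>i<p. (s * h i)\<^sup>2) = s\<^sup>2 * (\<Sum>i<p. (h i)\<^sup>2)"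
    by (simp add: sum_distrib_left power_mult_distrib)
  then show ?thesis
    unfolding l2_def by (simp add: real_sqrt_mult)
qed

lemma l2_eq_0_iff: "v \<in> Rp p \<Longrightarrow> l2 p v = 0 \<longleftrightarrow> v = (\<lambda>_. 0)"
  unfolding l2_def Rp_def by (auto simp: sum_nonneg_eq_0_iff fun_eq_iff) (metis lessThan_iff not_le)

lemma restr_in_Rp: "A \<subseteq> {..<p} \<Longrightarrow> restr A z \<in> Rp p"
  unfolding Rp_def restr_def by auto

lemma sum_lessThan_restr_squared:
  assumes "A \<subseteq> {..<p}"
  shows "(\<Sum>i<p. (restr A f i)\<^sup>2) = (\<Sum>i\<in>A. (f i)\<^sup>2)"
proof -
  have "(\<Sum>i<p. (restr A f i)\<^sup>2) = (\<Sum>i<p. if i \<in> A then (f i)\<^sup>2 else 0)"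
    by (rule sum.cong) (auto simp: restr_def)
  also have "\<dots> = (\<Sum>i\<in>{..<p} \<inter> A. (f i)\<^sup>2)"
    by (rule sum.inter_restrict[symmetric]) simp
  finally show ?thesis
    using assms by (simp add: Int_absorb1)
qed

lemma l2_restr_diff_squared:
  assumes "A \<subseteq> {..<p}"
  shows "(l2 p (\<lambda>i. restr A z i - z i))\<^sup>2 = (\<Sum>i<p. (z i)\<^sup>2) - (\<Sum>i\<in>A. (z i)\<^sup>2)"
proof -
  have "(\<Sum>i<p. (restr A z i - z i)\<^sup>2) = (\<Sum>i<p. (z i)\<^sup>2 - (restr A z i)\<^sup>2)"
    by (rule sum.cong) (auto simp: restr_def)
  then show ?thesis
    unfolding l2_squared sum_subtractf sum_lessThan_restr_squared[OF assms] .
qed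

lemma sum_restr_sub_divide_squared:
  fixes a b :: "nat \<Rightarrow> real"
  assumes "{i. a i \<noteq> 0} \<subseteq> S"
  shows "(\<Sum>i<p. (restr S (\<lambda>i. a i - b i / L) i)\<^sup>2)
    = (\<Sum>i<p. (a i)\<^sup>2) - 2 / L * (\<Sum>i<p. b i * a i) + (\<Sum>i<p. (restr S b i)\<^sup>2) / L\<^sup>2"
proof -
  have "(restr S (\<lambda>i. a i - b i / L) i)\<^sup>2 = (a i)\<^sup>2 - 2 / L * (b i * a i) + (restr S b i)\<^sup>2 / L\<^sup>2" for i
  proof (cases "i \<in> S")
    case False
    then have "a i = 0"
      using assms by auto
    with False show ?thesis
      by (simp add: restr_def)
  qed (simp add: restr_def power2_diff power_divide)
  then show ?thesis
    by (simp add: sum.distrib sum_subtractf sum_distrib_left sum_divide_distrib)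
qed

lemma sum_Un_le:
  fixes f :: "'a \<Rightarrow> real"
  assumes "finite A" "finite B" "\<And>i. 0 \<le> f i"
  shows "sum f (A \<union> B) \<le> sum f A + sum f B"
  using sum_Un[OF assms(1,2), of f] assms(3) by (simp add: sum_nonneg)

lemma power2_add_le_weighted:
  fixes a b \<eta> :: real
  assumes "0 < \<eta>"
  shows "(a + b)\<^sup>2 \<le> (1 + \<eta>) * a\<^sup>2 + (1 + 1 / \<eta>) * b\<^sup>2"
proof -
  have "0 \<le> (\<eta> * a - b)\<^sup>2 / \<eta>"
    using assms by simp
  also have "\<dots> = \<eta> * a\<^sup>2 - 2 * a * b + b\<^sup>2 / \<eta>"
    using assms by (simp add: power2_eq_square field_simps)
  finally show ?thesis
    by (simp add: power2_eq_square algebra_simps)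
qed

section \<open>Covers by groups\<close>

definition group_union :: "('a \<Rightarrow> 'b set) \<Rightarrow> 'a set \<Rightarrow> 'b set" where
  "group_union G I = (\<Union>i\<in>I. G i)"

lemma group_union_mono: "J \<subseteq> K \<Longrightarrow> group_union G J \<subseteq> group_union G K"
  unfolding group_union_def by auto

lemma group_union_Un: "group_union G (J \<union> K) = group_union G J \<union> group_union G K"
  unfolding group_union_def by auto

lemma group_union_subset_lessThan:
  "\<forall>i<M. G i \<subseteq> {..<p} \<Longrightarrow> I \<subseteq> {..<M} \<Longrightarrow> group_union G I \<subseteq> {..<p}"
  unfolding group_union_def by auto

lemma gsupp_card_le_card:
  "I \<subseteq> {..<M} \<Longrightarrow> S \<subseteq> group_union G I \<Longrightarrow> gsupp_card G M S \<le> card I"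
  unfolding gsupp_card_def group_union_def by (rule Least_le) auto

lemma gsupp_card_empty: "gsupp_card G M {} = 0"
  using gsupp_card_le_card[of "{}" M "{}" G] by simp

lemma gnorm0_le_card:
  "I \<subseteq> {..<M} \<Longrightarrow> {i. w i \<noteq> 0} \<subseteq> group_union G I \<Longrightarrow> gnorm0 G M w \<le> card I"
  unfolding gnorm0_def by (rule gsupp_card_le_card)

lemma gnorm0_restr_le: "I \<subseteq> {..<M} \<Longrightarrow> gnorm0 G M (restr (group_union G I) z) \<le> card I"
  by (rule gnorm0_le_card) (auto simp: restr_def)

lemma gnorm0_obtain_cover:
  assumes cover: "(\<Union>i<M. G i) = {..<p}" and w: "w \<in> Rp p"
  obtains I where "I \<subseteq> {..<M}" "card I = gnorm0 G M w" "{i. w i \<noteq> 0} \<subseteq> group_union G I"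
proof -
  let ?covers = "\<lambda>m. \<exists>I. I \<subseteq> {..<M} \<and> card I = m \<and> {i. w i \<noteq> 0} \<subseteq> group_union G I"
  have "{i. w i \<noteq> 0} \<subseteq> {..<p}"
    using w unfolding Rp_def by (auto simp: not_le[symmetric])
  then have "?covers M"
    using cover by (intro exI[of _ "{..<M}"]) (auto simp: group_union_def)
  then have "?covers (LEAST m. ?covers m)"
    by (rule LeastI)
  then show ?thesis
    using that unfolding gnorm0_def gsupp_card_def group_union_def by blast
qed

section \<open>Second-order expansion along segments\<close>

lemma filterlim_line_at_origin:
  assumes h: "h \<in> Rp p" "h \<noteq> (\<lambda>_. 0)"
  shows "filterlim (\<lambda>s::real. \<lambda>i. s * h i) (at (\<lambda>_. 0) within Rp p) (at 0)"
proof -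
  have "continuous_on UNIV (\<lambda>s::real. \<lambda>i. s * h i)"
    by (intro continuous_on_coordinatewise_then_product continuous_intros)
  then have "isCont (\<lambda>s::real. \<lambda>i. s * h i) 0"
    by (simp add: continuous_on_eq_continuous_at)
  then have "((\<lambda>s::real. \<lambda>i. s * h i) \<longlongrightarrow> (\<lambda>_. 0)) (at 0)"
    by (simp add: isCont_def)
  moreover have "(\<lambda>i. s * h i) \<in> Rp p \<and> (\<lambda>i. s * h i) \<noteq> (\<lambda>_. 0)" if "s \<noteq> 0" for s
    using h that by (auto simp: Rp_def fun_eq_iff)
  ultimately show ?thesis
    unfolding filterlim_at by (auto simp: eventually_at_filter)
qed

lemma line_has_field_derivative_at_0:
  fixes F :: "(nat \<Rightarrow> real) \<Rightarrow> real"
  assumes lim: "((\<lambda>k. (F (\<lambda>i. w i + k i) - F w - (\<Sum>i<p. a i * k i)) / l2 p k) \<longlongrightarrow> 0)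
      (at (\<lambda>_. 0) within Rp p)"
    and h: "h \<in> Rp p" "h \<noteq> (\<lambda>_. 0)"
  shows "((\<lambda>s. F (\<lambda>i. w i + s * h i)) has_field_derivative (\<Sum>i<p. a i * h i)) (at 0)"
proof -
  have hn: "l2 p h \<noteq> 0"
    using h by (simp add: l2_eq_0_iff)
  define c where "c = (\<Sum>i<p. a i * h i)"
  define E where "E = (\<lambda>s. (F (\<lambda>i. w i + s * h i) - F w - s * c) / l2 p (\<lambda>i. s * h i))"
  have lin: "(\<Sum>i<p. a i * (s * h i)) = s * c" for s
    unfolding c_def by (simp add: sum_distrib_left algebra_simps)
  have "(E \<longlongrightarrow> 0) (at 0)"
    using filterlim_compose[OF lim filterlim_line_at_origin[OF h]] by (simp add: E_def lin)
  then have "((\<lambda>s. \<bar>E s\<bar> * l2 p h) \<longlongrightarrow> 0) (at 0)"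
    by (auto intro: tendsto_mult_left_zero tendsto_rabs_zero)
  moreover have "\<bar>E s\<bar> * l2 p h = \<bar>(F (\<lambda>i. w i + s * h i) - F w) / s - c\<bar>" if "s \<noteq> 0" for s
  proof -
    have "\<bar>E s\<bar> * l2 p h = \<bar>F (\<lambda>i. w i + s * h i) - F w - s * c\<bar> / \<bar>s\<bar>"
      using that hn l2_nonneg[of p h] by (simp add: E_def l2_scale abs_divide abs_mult)
    also have "\<dots> = \<bar>(F (\<lambda>i. w i + s * h i) - F w) / s - c\<bar>"
      using that by (simp add: abs_divide[symmetric] diff_divide_distrib)
    finally show ?thesis .
  qed
  ultimately have "((\<lambda>s. \<bar>(F (\<lambda>i. w i + s * h i) - F w) / s - c\<bar>) \<longlongrightarrow> 0) (at 0)"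
    by (elim Lim_transform_eventually) (auto simp: eventually_at_filter)
  then show ?thesis
    unfolding DERIV_def c_def by (simp add: tendsto_rabs_zero_iff Lim_null[symmetric])
qed

lemma line_has_field_derivative:
  fixes F :: "(nat \<Rightarrow> real) \<Rightarrow> real"
  assumes lim: "((\<lambda>k. (F (\<lambda>i. (u i + t * h i) + k i) - F (\<lambda>i. u i + t * h i)
        - (\<Sum>i<p. a i * k i)) / l2 p k) \<longlongrightarrow> 0) (at (\<lambda>_. 0) within Rp p)"
    and h: "h \<in> Rp p" "h \<noteq> (\<lambda>_. 0)"
  shows "((\<lambda>s. F (\<lambda>i. u i + s * h i)) has_field_derivative (\<Sum>i<p. a i * h i)) (at t)"
proof -
  have "((\<lambda>s. F (\<lambda>i. u i + (s + t) * h i)) has_field_derivative (\<Sum>i<p. a i * h i)) (at 0)"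
    using line_has_field_derivative_at_0[OF lim h] by (simp add: algebra_simps)
  then show ?thesis
    using DERIV_shift[of _ _ 0 t] by simp
qed

lemma twice_diff_grad_in_Rp: "twice_diff_grad_hess p f g H \<Longrightarrow> x \<in> Rp p \<Longrightarrow> g x \<in> Rp p"
  unfolding twice_diff_grad_hess_def by blast

lemma twice_diff_line_derivatives:
  assumes td: "twice_diff_grad_hess p f g H"
    and u: "u \<in> Rp p" and h: "h \<in> Rp p" "h \<noteq> (\<lambda>_. 0)"
  shows "((\<lambda>s. f (\<lambda>i. u i + s * h i)) has_field_derivative
            (\<Sum>i<p. g (\<lambda>i. u i + t * h i) i * h i)) (at t)"
    and "((\<lambda>s. \<Sum>i<p. g (\<lambda>i. u i + s * h i) i * h i) has_field_derivative
            (\<Sum>i<p. \<Sum>j<p. h i * H (\<lambda>i. u i + t * h i) i j * h j)) (at t)"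
proof -
  define w where "w = (\<lambda>i. u i + t * h i)"
  have "w \<in> Rp p"
    using u h unfolding w_def Rp_def by auto
  then have grad: "((\<lambda>k. (f (\<lambda>i. w i + k i) - f w - (\<Sum>i<p. g w i * k i)) / l2 p k) \<longlongrightarrow> 0)
        (at (\<lambda>_. 0) within Rp p)"
    and hess: "\<And>i. i < p \<Longrightarrow> ((\<lambda>k. (g (\<lambda>j. w j + k j) i - g w i - (\<Sum>j<p. H w i j * k j)) / l2 p k)
        \<longlongrightarrow> 0) (at (\<lambda>_. 0) within Rp p)"
    using td unfolding twice_diff_grad_hess_def by blast+
  show "((\<lambda>s. f (\<lambda>i. u i + s * h i)) has_field_derivative (\<Sum>i<p. g w i * h i)) (at t)"
    using line_has_field_derivative[OF grad[unfolded w_def] h] by (simp add: w_def)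
  have "((\<lambda>s. g (\<lambda>i. u i + s * h i) i) has_field_derivative (\<Sum>j<p. H w i j * h j)) (at t)"
    if "i < p" for i
    using line_has_field_derivative[OF hess[OF that, unfolded w_def] h] by (simp add: w_def)
  then have "((\<lambda>s. \<Sum>i<p. g (\<lambda>i. u i + s * h i) i * h i) has_field_derivative
      (\<Sum>i<p. (\<Sum>j<p. H w i j * h j) * h i)) (at t)"
    by (intro DERIV_sum DERIV_cmult_right) simp
  then show "((\<lambda>s. \<Sum>i<p. g (\<lambda>i. u i + s * h i) i * h i) has_field_derivative
      (\<Sum>i<p. \<Sum>j<p. h i * H w i j * h j)) (at t)"
    by (simp add: sum_distrib_left sum_distrib_right mult_ac)
qed

lemma twice_diff_taylor_bounds:
  assumes td: "twice_diff_grad_hess p f g H"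
    and u: "u \<in> Rp p" and h: "h \<in> Rp p"
    and form: "\<And>t. 0 \<le> t \<Longrightarrow> t \<le> 1 \<Longrightarrow>
      lo \<le> (\<Sum>i<p. \<Sum>j<p. h i * H (\<lambda>i. u i + t * h i) i j * h j) \<and>
      (\<Sum>i<p. \<Sum>j<p. h i * H (\<lambda>i. u i + t * h i) i j * h j) \<le> hi"
  shows "f u + (\<Sum>i<p. g u i * h i) + lo / 2 \<le> f (\<lambda>i. u i + h i)"
    and "f (\<lambda>i. u i + h i) \<le> f u + (\<Sum>i<p. g u i * h i) + hi / 2"
proof -
  define q where "q = (\<lambda>t. \<Sum>i<p. \<Sum>j<p. h i * H (\<lambda>i. u i + t * h i) i j * h j)"
  obtain t where t: "0 \<le> t" "t \<le> 1"
    and taylor: "f (\<lambda>i. u i + h i) = f u + (\<Sum>i<p. g u i * h i) + q t / 2"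
  proof (cases "h = (\<lambda>_. 0)")
    case True
    then show ?thesis
      using that[of 0] by (simp add: q_def)
  next
    case False
    define diff where "diff = (\<lambda>m::nat. if m = 0 then (\<lambda>s. f (\<lambda>i. u i + s * h i))
      else if m = 1 then (\<lambda>s. \<Sum>i<p. g (\<lambda>i. u i + s * h i) i * h i) else q)"
    have "\<forall>m s. m < 2 \<and> 0 \<le> s \<and> s \<le> 1 \<longrightarrow> (diff m has_field_derivative diff (Suc m) s) (at s)"
      using twice_diff_line_derivatives[OF td u h False] by (auto simp: diff_def q_def less_2_cases_iff)
    from Maclaurin[OF zero_less_one _ refl this]
    obtain s where "0 < s" "s < 1" "diff 0 1 = (\<Sum>m<2. diff m 0 / fact m * 1 ^ m) + diff 2 s / fact 2 * 1 ^ 2"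
      by auto
    then show ?thesis
      using that[of s] by (simp add: diff_def numeral_2_eq_2)
  qed
  then show "f u + (\<Sum>i<p. g u i * h i) + lo / 2 \<le> f (\<lambda>i. u i + h i)"
    and "f (\<lambda>i. u i + h i) \<le> f u + (\<Sum>i<p. g u i * h i) + hi / 2"
    using form[OF t] unfolding q_def by simp_all
qed

section \<open>Restricted strong convexity and smoothness\<close>

lemma rsc_rss_le_constants: "0 < p \<Longrightarrow> rsc_rss p G M H K \<alpha> L \<Longrightarrow> \<alpha> \<le> L"
proof -
  assume p: "0 < p" and rs: "rsc_rss p G M H K \<alpha> L"
  define v where "v = (\<lambda>i::nat. if i = 0 then 1 else 0 :: real)"
  have "v \<in> Rp p" "(\<lambda>_. 0) \<in> Rp p"
    using p unfolding v_def Rp_def by auto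
  moreover have "gnorm0 G M (\<lambda>_::nat. 0::real) \<le> K"
    using gnorm0_le_card[of "{}" M "\<lambda>_::nat. 0::real" G] by simp
  moreover have "(l2 p v)\<^sup>2 = 1"
  proof -
    have "(\<Sum>i<p. (v i)\<^sup>2) = (\<Sum>i<p. if i = 0 then 1 else 0)"
      by (rule sum.cong) (auto simp: v_def)
    then show ?thesis
      using p unfolding l2_squared by simp
  qed
  ultimately show "\<alpha> \<le> L"
    using rs unfolding rsc_rss_def by fastforce
qed

context
  fixes p :: nat and f :: "(nat \<Rightarrow> real) \<Rightarrow> real" and g :: "(nat \<Rightarrow> real) \<Rightarrow> nat \<Rightarrow> real"
    and H :: "(nat \<Rightarrow> real) \<Rightarrow> nat \<Rightarrow> nat \<Rightarrow> real" and G :: "nat \<Rightarrow> nat set"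
    and M K :: nat and I :: "nat set" and \<alpha> L :: real
  assumes td: "twice_diff_grad_hess p f g H" and rs: "rsc_rss p G M H K \<alpha> L"
    and I: "I \<subseteq> {..<M}" "card I \<le> K"
begin

lemma rsc_rss_quadratic_bounds:
  assumes u: "u \<in> Rp p" and v: "v \<in> Rp p"
    and su: "{i. u i \<noteq> 0} \<subseteq> group_union G I"
    and sv: "{i. v i \<noteq> 0} \<subseteq> group_union G I"
  shows "f u + (\<Sum>i<p. g u i * (v i - u i)) + \<alpha> / 2 * (l2 p (\<lambda>i. v i - u i))\<^sup>2 \<le> f v"
    and "f v \<le> f u + (\<Sum>i<p. g u i * (v i - u i)) + L / 2 * (l2 p (\<lambda>i. v i - u i))\<^sup>2"
proof -
  define h where "h = (\<lambda>i. v i - u i)"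
  have h: "h \<in> Rp p"
    using u v unfolding Rp_def h_def by auto
  have "\<alpha> * (l2 p h)\<^sup>2 \<le> (\<Sum>i<p. \<Sum>j<p. h i * H (\<lambda>i. u i + t * h i) i j * h j) \<and>
      (\<Sum>i<p. \<Sum>j<p. h i * H (\<lambda>i. u i + t * h i) i j * h j) \<le> L * (l2 p h)\<^sup>2" for t
  proof -
    have "{i. u i + t * h i \<noteq> 0} \<subseteq> group_union G I"
    proof
      fix i
      assume "i \<in> {i. u i + t * h i \<noteq> 0}"
      then have "u i \<noteq> 0 \<or> v i \<noteq> 0"
        unfolding h_def by auto
      then show "i \<in> group_union G I"
        using su sv by auto
    qed
    then have "gnorm0 G M (\<lambda>i. u i + t * h i) \<le> card I"
      by (rule gnorm0_le_card[OF I(1)])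
    moreover have "(\<lambda>i. u i + t * h i) \<in> Rp p"
      using u h unfolding Rp_def by auto
    ultimately show ?thesis
      using rs h I(2) unfolding rsc_rss_def by fastforce
  qed
  moreover have "(\<lambda>i. u i + h i) = v"
    unfolding h_def by auto
  ultimately show "f u + (\<Sum>i<p. g u i * (v i - u i)) + \<alpha> / 2 * (l2 p (\<lambda>i. v i - u i))\<^sup>2 \<le> f v"
    and "f v \<le> f u + (\<Sum>i<p. g u i * (v i - u i)) + L / 2 * (l2 p (\<lambda>i. v i - u i))\<^sup>2"
    using twice_diff_taylor_bounds[OF td u h, of "\<alpha> * (l2 p h)\<^sup>2" "L * (l2 p h)\<^sup>2"]
    unfolding h_def by auto
qed

text \<open>Compare \<open>f\<close> at \<open>x\<close> and at the gradient step \<open>v = y - (\<nabla>f(y) - \<nabla>f(x))\<^sub>S / L\<close>,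
  \<open>S = group_union G I\<close>, which is still supported in \<open>S\<close>: strong convexity from \<open>x\<close> and
  smoothness from \<open>y\<close> then squeeze \<open>f v\<close>.\<close>

lemma restricted_cocoercivity_half:
  assumes \<alpha>: "0 < \<alpha>" and L: "0 < L"
    and x: "x \<in> Rp p" and y: "y \<in> Rp p"
    and sx: "{i. x i \<noteq> 0} \<subseteq> group_union G I" and sy: "{i. y i \<noteq> 0} \<subseteq> group_union G I"
  shows "(\<Sum>i<p. (restr (group_union G I) (\<lambda>i. g y i - g x i) i)\<^sup>2) / (2 * L)
      \<le> f y - f x - (\<Sum>i<p. g x i * (y i - x i))"
proof -
  define \<delta> where "\<delta> = restr (group_union G I) (\<lambda>i. g y i - g x i)"
  define v where "v = (\<lambda>i. y i - \<delta> i / L)"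
  have "g x \<in> Rp p" "g y \<in> Rp p"
    using twice_diff_grad_in_Rp[OF td] x y by auto
  then have v: "v \<in> Rp p"
    using y unfolding v_def \<delta>_def restr_def Rp_def by auto
  have sv: "{i. v i \<noteq> 0} \<subseteq> group_union G I"
    using sy unfolding v_def \<delta>_def restr_def by auto
  have "0 \<le> \<alpha> / 2 * (l2 p (\<lambda>i. v i - x i))\<^sup>2"
    using \<alpha> by simp
  then have "f x + (\<Sum>i<p. g x i * (v i - x i)) \<le> f v"
    using rsc_rss_quadratic_bounds(1)[OF x v sx sv] by linarith
  moreover have "f v \<le> f y + (\<Sum>i<p. g y i * (v i - y i)) + L / 2 * (l2 p (\<lambda>i. v i - y i))\<^sup>2"
    by (rule rsc_rss_quadratic_bounds(2)[OF y v sy sv])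
  moreover have "(\<Sum>i<p. g x i * (v i - x i)) = (\<Sum>i<p. g x i * (y i - x i)) - (\<Sum>i<p. g x i * \<delta> i) / L"
    unfolding v_def by (simp add: algebra_simps sum_subtractf sum.distrib sum_divide_distrib)
  moreover have "(\<Sum>i<p. g y i * (v i - y i)) = - (\<Sum>i<p. g y i * \<delta> i) / L"
    unfolding v_def by (simp add: sum_negf sum_divide_distrib)
  moreover have "L / 2 * (l2 p (\<lambda>i. v i - y i))\<^sup>2 = (\<Sum>i<p. (\<delta> i)\<^sup>2) / (2 * L)"
    unfolding l2_squared v_def using L
    by (simp add: power_divide sum_divide_distrib[symmetric] power2_eq_square)
  moreover have "(\<Sum>i<p. g y i * \<delta> i) - (\<Sum>i<p. g x i * \<delta> i) = (\<Sum>i<p. (\<delta> i)\<^sup>2)"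
    unfolding sum_subtractf[symmetric]
    by (rule sum.cong) (auto simp: \<delta>_def restr_def power2_eq_square algebra_simps)
  then have "(\<Sum>i<p. g y i * \<delta> i) / L - (\<Sum>i<p. g x i * \<delta> i) / L
      = (\<Sum>i<p. (\<delta> i)\<^sup>2) / (2 * L) + (\<Sum>i<p. (\<delta> i)\<^sup>2) / (2 * L)"
    by (simp add: diff_divide_distrib[symmetric])
  ultimately show ?thesis
    unfolding \<delta>_def[symmetric] by linarith
qed

lemma restricted_cocoercivity:
  assumes \<alpha>: "0 < \<alpha>" and L: "0 < L"
    and x: "x \<in> Rp p" and y: "y \<in> Rp p"
    and sx: "{i. x i \<noteq> 0} \<subseteq> group_union G I" and sy: "{i. y i \<noteq> 0} \<subseteq> group_union G I"
  shows "(\<Sum>i<p. (restr (group_union G I) (\<lambda>i. g y i - g x i) i)\<^sup>2)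
      \<le> L * (\<Sum>i<p. (g y i - g x i) * (y i - x i))"
proof -
  let ?Q = "\<Sum>i<p. (restr (group_union G I) (\<lambda>i. g y i - g x i) i)\<^sup>2"
  have flip: "(\<Sum>i<p. (restr (group_union G I) (\<lambda>i. g x i - g y i) i)\<^sup>2) = ?Q"
    unfolding restr_def by (rule sum.cong) (auto simp: power2_commute)
  have "?Q / (2 * L) + ?Q / (2 * L)
      \<le> (f y - f x - (\<Sum>i<p. g x i * (y i - x i))) + (f x - f y - (\<Sum>i<p. g y i * (x i - y i)))"
    using restricted_cocoercivity_half[OF \<alpha> L x y sx sy]
      restricted_cocoercivity_half[OF \<alpha> L y x sy sx] unfolding flip by linarith
  also have "\<dots> = (\<Sum>i<p. (g y i - g x i) * (y i - x i))"
    by (simp add: algebra_simps sum_subtractf sum.distrib)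
  finally show ?thesis
    using L by (simp add: field_simps)
qed

lemma restricted_strong_monotonicity:
  assumes x: "x \<in> Rp p" and y: "y \<in> Rp p"
    and sx: "{i. x i \<noteq> 0} \<subseteq> group_union G I" and sy: "{i. y i \<noteq> 0} \<subseteq> group_union G I"
  shows "\<alpha> * (\<Sum>i<p. (y i - x i)\<^sup>2) \<le> (\<Sum>i<p. (g y i - g x i) * (y i - x i))"
proof -
  have flip: "(\<Sum>i<p. (x i - y i)\<^sup>2) = (\<Sum>i<p. (y i - x i)\<^sup>2)"
    by (rule sum.cong) (auto simp: power2_commute)
  have "\<alpha> / 2 * (\<Sum>i<p. (y i - x i)\<^sup>2) + \<alpha> / 2 * (\<Sum>i<p. (y i - x i)\<^sup>2)
      \<le> (f y - f x - (\<Sum>i<p. g x i * (y i - x i))) + (f x - f y - (\<Sum>i<p. g y i * (x i - y i)))"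
    using rsc_rss_quadratic_bounds(1)[OF x y sx sy]
      rsc_rss_quadratic_bounds(1)[OF y x sy sx] unfolding l2_squared flip by linarith
  also have "\<dots> = (\<Sum>i<p. (g y i - g x i) * (y i - x i))"
    by (simp add: algebra_simps sum_subtractf sum.distrib)
  finally show ?thesis
    by simp
qed

lemma restricted_gradient_step_contraction:
  assumes \<alpha>: "0 < \<alpha>" and L: "0 < L"
    and x: "x \<in> Rp p" and y: "y \<in> Rp p"
    and sx: "{i. x i \<noteq> 0} \<subseteq> group_union G I" and sy: "{i. y i \<noteq> 0} \<subseteq> group_union G I"
  shows "(\<Sum>i<p. (restr (group_union G I) (\<lambda>i. (y i - x i) - (g y i - g x i) / L) i)\<^sup>2)
      \<le> (1 - \<alpha> / L) * (\<Sum>i<p. (y i - x i)\<^sup>2)"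
proof -
  define Q where "Q = (\<Sum>i<p. (restr (group_union G I) (\<lambda>i. g y i - g x i) i)\<^sup>2)"
  define D where "D = (\<Sum>i<p. (g y i - g x i) * (y i - x i))"
  define E where "E = (\<Sum>i<p. (y i - x i)\<^sup>2)"
  have "{i. y i - x i \<noteq> 0} \<subseteq> {i. x i \<noteq> 0} \<union> {i. y i \<noteq> 0}"
    by auto
  then have "{i. y i - x i \<noteq> 0} \<subseteq> group_union G I"
    using sx sy by blast
  then have "(\<Sum>i<p. (restr (group_union G I) (\<lambda>i. (y i - x i) - (g y i - g x i) / L) i)\<^sup>2)
      = E - 2 / L * D + Q / L\<^sup>2"
    unfolding E_def D_def Q_def by (rule sum_restr_sub_divide_squared)
  also have "\<dots> \<le> E - 2 / L * D + D / L"
  proof -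
    have "Q / L \<le> D"
      using restricted_cocoercivity[OF \<alpha> L x y sx sy] L
      unfolding Q_def D_def by (simp add: pos_divide_le_eq mult.commute)
    then have "Q / L / L \<le> D / L"
      using L by (intro divide_right_mono) auto
    then show ?thesis
      unfolding power2_eq_square divide_divide_eq_left[symmetric] by (rule add_left_mono)
  qed
  also have "\<dots> = E - D / L"
    using L by (simp add: field_simps)
  also have "\<dots> \<le> E - \<alpha> * E / L"
    using restricted_strong_monotonicity[OF x y sx sy] L
    unfolding D_def E_def by (simp add: divide_right_mono)
  also have "\<dots> = (1 - \<alpha> / L) * E"
    by (simp add: algebra_simps)
  finally show ?thesis
    unfolding E_def .
qed

lemma gradient_step_error:
  assumes \<alpha>: "0 < \<alpha>" and L: "0 < L" and S: "group_union G I \<subseteq> {..<p}"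
    and x: "x \<in> Rp p" and w: "w \<in> Rp p"
    and sx: "{i. x i \<noteq> 0} \<subseteq> group_union G I" and sw: "{i. w i \<noteq> 0} \<subseteq> group_union G I"
    and \<mu>: "0 < \<mu>" and gw: "(\<Sum>i\<in>group_union G I. (g w i)\<^sup>2) \<le> B"
  shows "(\<Sum>i\<in>group_union G I. (x i - 1 / L * g x i - w i)\<^sup>2)
    \<le> (1 + \<mu>) * ((1 - \<alpha> / L) * (\<Sum>i<p. (x i - w i)\<^sup>2)) + (1 + 1 / \<mu>) * (B / L\<^sup>2)"
proof -
  define a where "a = (\<lambda>i. (x i - w i) - (g x i - g w i) / L)"
  have "(\<Sum>i\<in>group_union G I. (x i - 1 / L * g x i - w i)\<^sup>2)
      \<le> (\<Sum>i\<in>group_union G I. (1 + \<mu>) * (a i)\<^sup>2 + (1 + 1 / \<mu>) * (- (g w i / L))\<^sup>2)"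
  proof (rule sum_mono)
    fix i
    have "x i - 1 / L * g x i - w i = a i + - (g w i / L)"
      unfolding a_def by (simp add: algebra_simps diff_divide_distrib)
    then show "(x i - 1 / L * g x i - w i)\<^sup>2 \<le> (1 + \<mu>) * (a i)\<^sup>2 + (1 + 1 / \<mu>) * (- (g w i / L))\<^sup>2"
      using power2_add_le_weighted[OF \<mu>] by metis
  qed
  also have "\<dots> = (1 + \<mu>) * (\<Sum>i<p. (restr (group_union G I) a i)\<^sup>2)
      + (1 + 1 / \<mu>) * ((\<Sum>i\<in>group_union G I. (g w i)\<^sup>2) / L\<^sup>2)"
    unfolding sum_lessThan_restr_squared[OF S]
    by (simp add: sum.distrib sum_distrib_left sum_divide_distrib power_divide)
  also have "\<dots> \<le> (1 + \<mu>) * ((1 - \<alpha> / L) * (\<Sum>i<p. (x i - w i)\<^sup>2)) + (1 + 1 / \<mu>) * (B / L\<^sup>2)"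
    using restricted_gradient_step_contraction[OF \<alpha> L w x sw sx] gw \<mu>
    unfolding a_def by (intro add_mono mult_left_mono divide_right_mono) auto
  finally show ?thesis .
qed

end

section \<open>Dropping groups from a cover\<close>

text \<open>The coordinates lost when dropping \<open>j\<close> from \<open>K\<close> are those covered by \<open>j\<close> alone, so the
  losses of different \<open>j\<close> are disjoint and one of them is at most the average.\<close>

lemma exists_group_removal_small_loss:
  fixes c :: "'b \<Rightarrow> real"
  assumes K: "finite K" "K \<noteq> {}" and fin: "finite (group_union G K)" and c: "\<And>i. 0 \<le> c i"
  shows "\<exists>j\<in>K. sum c (group_union G K) - sum c (group_union G (K - {j}))
    \<le> sum c (group_union G K) / card K"
proof (rule ccontr)
  define m where "m = sum c (group_union G K)"
  define U where "U = (\<lambda>j. group_union G K - group_union G (K - {j}))"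
  assume "\<not> ?thesis"
  moreover have "sum c (U j) = m - sum c (group_union G (K - {j}))" for j
    unfolding m_def U_def by (rule sum_diff[OF fin group_union_mono]) auto
  ultimately have big: "m / card K < sum c (U j)" if "j \<in> K" for j
    using that unfolding m_def by (simp add: not_le)
  have "U j \<inter> U l = {}" if "j \<in> K" "l \<in> K" "j \<noteq> l" for j l
  proof -
    have "i \<notin> G l" if "i \<in> U j" for i
      using that \<open>l \<in> K\<close> \<open>j \<noteq> l\<close> unfolding U_def group_union_def by auto
    moreover have "i \<in> G l" if "i \<in> U j" "i \<in> U l" for i
    proof -
      obtain j' where "j' \<in> K" "i \<in> G j'"
        using \<open>i \<in> U l\<close> unfolding U_def group_union_def by auto
      then show ?thesis
        using \<open>i \<in> U l\<close> unfolding U_def group_union_def by (cases "j' = l") auto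
    qed
    ultimately show ?thesis
      by blast
  qed
  then have "(\<Sum>j\<in>K. sum c (U j)) = sum c (\<Union>j\<in>K. U j)"
    using fin K(1) by (intro sum.UNION_disjoint_family[symmetric]) (auto simp: U_def disjoint_family_on_def)
  also have "\<dots> \<le> m"
    unfolding m_def using fin c by (intro sum_mono2) (auto simp: U_def)
  finally have "(\<Sum>j\<in>K. sum c (U j)) \<le> m" .
  moreover have "(\<Sum>j\<in>K. m / card K) < (\<Sum>j\<in>K. sum c (U j))"
    using K big by (intro sum_strict_mono) auto
  ultimately show False
    using K by simp
qed

lemma exists_subfamily_small_loss:
  fixes c :: "'b \<Rightarrow> real"
  assumes K: "finite K" and fin: "finite (group_union G K)" and c: "\<And>i. 0 \<le> c i"
    and j: "j < card K"
  shows "\<exists>K'\<subseteq>K. card K' = card K - j \<and>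
    sum c (group_union G K) - sum c (group_union G K') \<le> j * sum c (group_union G K) / (card K - j)"
  using j
proof (induction j)
  case 0
  show ?case
    by (intro exI[of _ K]) auto
next
  case (Suc j)
  define m where "m = sum c (group_union G K)"
  have m: "0 \<le> m"
    unfolding m_def using c by (simp add: sum_nonneg)
  obtain K' where K': "K' \<subseteq> K" "card K' = card K - j"
    and loss: "m - sum c (group_union G K') \<le> j * m / (card K - j)"
    using Suc.IH Suc.prems unfolding m_def by auto
  have "finite K'"
    using K'(1) K by (rule finite_subset)
  have fin': "finite (group_union G K')"
    using group_union_mono[OF K'(1)] fin by (rule finite_subset)
  have "K' \<noteq> {}"
    using K'(2) Suc.prems by auto
  from exists_group_removal_small_loss[where c = c, OF \<open>finite K'\<close> \<open>K' \<noteq> {}\<close> fin' c]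
  obtain l where l: "l \<in> K'"
    and loss_l: "sum c (group_union G K') - sum c (group_union G (K' - {l}))
      \<le> sum c (group_union G K') / card K'" ..
  have "sum c (group_union G K') \<le> m"
    unfolding m_def using fin group_union_mono[OF K'(1), of G] c by (intro sum_mono2) auto
  then have "sum c (group_union G K') / card K' \<le> m / (card K - j)"
    unfolding K'(2) by (rule divide_right_mono) simp
  have "m - sum c (group_union G (K' - {l}))
      = (m - sum c (group_union G K')) + (sum c (group_union G K') - sum c (group_union G (K' - {l})))"
    by simp
  also have "\<dots> \<le> j * m / (card K - j) + m / (card K - j)"
    using loss loss_l \<open>sum c (group_union G K') / card K' \<le> m / (card K - j)\<close> by (intro add_mono) auto
  also have "\<dots> = Suc j * m / (card K - j)"
    by (simp add: add_divide_distrib algebra_simps)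
  also have "\<dots> \<le> Suc j * m / (card K - Suc j)"
    using Suc.prems m by (intro divide_left_mono mult_nonneg_nonneg) auto
  finally have "m - sum c (group_union G (K' - {l})) \<le> Suc j * m / (card K - Suc j)" .
  moreover have "card (K' - {l}) = card K - Suc j"
    using K'(2) l \<open>finite K'\<close> by simp
  ultimately show ?case
    using K'(1) unfolding m_def by (intro exI[of _ "K' - {l}"]) auto
qed

lemma exists_subfamily_room_small_loss:
  fixes c :: "'b \<Rightarrow> real"
  assumes K: "finite K" "card K \<le> k" and fin: "finite (group_union G K)" and c: "\<And>i. 0 \<le> c i"
    and s: "s < k"
  obtains K' where "K' \<subseteq> K" "card K' + s \<le> k"
    "sum c (group_union G K) - sum c (group_union G K') \<le> real s / real (k - s) * sum c (group_union G K)"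
proof (cases "card K + s \<le> k")
  case True
  have "0 \<le> s / (k - s) * sum c (group_union G K)"
    using c by (simp add: sum_nonneg)
  then show ?thesis
    using True by (intro that[of K]) auto
next
  case False
  define j where "j = card K + s - k"
  have j: "j < card K" "j \<le> s" "card K - j = k - s"
    using False s K(2) unfolding j_def by auto
  from exists_subfamily_small_loss[where c = c, OF K(1) fin c j(1)]
  obtain K' where K': "K' \<subseteq> K" "card K' = card K - j"
    and loss: "sum c (group_union G K) - sum c (group_union G K')
      \<le> j * sum c (group_union G K) / (card K - j)"
    by blast
  have card: "card K' + s \<le> k"
    using K'(2) j(3) s by simp
  have "j * sum c (group_union G K) / (card K - j) = j / (k - s) * sum c (group_union G K)"
    unfolding j(3) by simp
  also have "\<dots> \<le> s / (k - s) * sum c (group_union G K)"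
    using j(2) c by (intro mult_right_mono divide_right_mono sum_nonneg) auto
  finally have "sum c (group_union G K) - sum c (group_union G K')
      \<le> s / (k - s) * sum c (group_union G K)"
    by (rule order_trans[OF loss])
  with K'(1) card show ?thesis
    by (rule that)
qed

section \<open>The exact projection\<close>

text \<open>Restricting the argument to the union is itself admissible, and strictly closer
  unless the projection already agrees with the argument there.\<close>

lemma proj_set_eq_restr:
  assumes grp: "\<forall>i<M. G i \<subseteq> {..<p}" and P: "P \<in> proj_set p G M k z"
    and K: "K \<subseteq> {..<M}" "card K \<le> k" and sP: "{i. P i \<noteq> 0} \<subseteq> group_union G K"
  shows "P = restr (group_union G K) z"
proof -
  define C where "C = group_union G K"
  have C: "C \<subseteq> {..<p}"
    unfolding C_def by (rule group_union_subset_lessThan[OF grp K(1)])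
  have "gnorm0 G M (restr C z) \<le> k"
    using gnorm0_restr_le[OF K(1), of G z] K(2) unfolding C_def by linarith
  then have opt: "(\<Sum>i<p. (P i - z i)\<^sup>2) \<le> (\<Sum>i<p. (restr C z i - z i)\<^sup>2)"
    using P restr_in_Rp[OF C] unfolding proj_set_def l2_squared by blast
  have P0: "P i = 0" if "i \<notin> C" for i
    using that sP unfolding C_def by auto
  then have "(P i - z i)\<^sup>2 = (restr C z i - z i)\<^sup>2 + (restr C (\<lambda>i. P i - z i) i)\<^sup>2" for i
    by (cases "i \<in> C") (simp_all add: restr_def)
  then have "(\<Sum>i<p. (restr C (\<lambda>i. P i - z i) i)\<^sup>2) = 0"
    using opt by (simp add: sum.distrib sum_nonneg antisym)
  then have zero: "\<forall>i\<in>{..<p}. (restr C (\<lambda>i. P i - z i) i)\<^sup>2 = 0"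
    by (simp add: sum_nonneg_eq_0_iff)
  have "P i = z i" if "i \<in> C" for i
  proof -
    have "(restr C (\<lambda>i. P i - z i) i)\<^sup>2 = 0"
      using zero C that by blast
    with that show ?thesis
      by (simp add: restr_def)
  qed
  with P0 show ?thesis
    unfolding C_def[symmetric] restr_def by (intro ext) simp
qed

lemma proj_set_mass_ge:
  assumes grp: "\<forall>i<M. G i \<subseteq> {..<p}" and P: "P \<in> proj_set p G M k z"
    and PC: "P = restr C z" and C: "C \<subseteq> {..<p}"
    and J: "J \<subseteq> {..<M}" "card J \<le> k"
  shows "(\<Sum>i\<in>group_union G J. (z i)\<^sup>2) \<le> (\<Sum>i\<in>C. (z i)\<^sup>2)"
proof -
  have CJ: "group_union G J \<subseteq> {..<p}"
    by (rule group_union_subset_lessThan[OF grp J(1)])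
  have "gnorm0 G M (restr (group_union G J) z) \<le> k"
    using gnorm0_restr_le[OF J(1), of G z] J(2) by linarith
  then have "(l2 p (\<lambda>i. P i - z i))\<^sup>2 \<le> (l2 p (\<lambda>i. restr (group_union G J) z i - z i))\<^sup>2"
    using P restr_in_Rp[OF CJ] unfolding proj_set_def by blast
  then show ?thesis
    unfolding PC l2_restr_diff_squared[OF C] l2_restr_diff_squared[OF CJ] by simp
qed

lemma proj_set_exchange:
  assumes grp: "\<forall>i<M. G i \<subseteq> {..<p}" and P: "P \<in> proj_set p G M k z"
    and PK: "P = restr (group_union G K) z" and K: "K \<subseteq> {..<M}"
    and JI: "J \<subseteq> {..<M}" "I \<subseteq> {..<M}" "card (J \<union> I) \<le> k"
  shows "(\<Sum>i\<in>group_union G I - group_union G K. (z i)\<^sup>2)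
    \<le> (\<Sum>i\<in>group_union G K - group_union G I. (z i)\<^sup>2) - (\<Sum>i\<in>group_union G J - group_union G I. (z i)\<^sup>2)"
proof -
  define C where "C = group_union G K"
  define X where "X = group_union G I"
  have C: "C \<subseteq> {..<p}"
    unfolding C_def by (rule group_union_subset_lessThan[OF grp K])
  have "finite (group_union G A)" if "A \<subseteq> {..<M}" for A
    using group_union_subset_lessThan[OF grp that] finite_subset by auto
  then have fin: "finite C" "finite X" "finite (group_union G J)"
    unfolding C_def X_def using K JI(1,2) by auto
  have "(\<Sum>i\<in>group_union G (J \<union> I). (z i)\<^sup>2) \<le> (\<Sum>i\<in>C. (z i)\<^sup>2)"
    using JI by (intro proj_set_mass_ge[OF grp P PK[folded C_def] C]) auto
  moreover have "(\<Sum>i\<in>group_union G (J \<union> I). (z i)\<^sup>2)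
      = (\<Sum>i\<in>X. (z i)\<^sup>2) + (\<Sum>i\<in>group_union G J - X. (z i)\<^sup>2)"
  proof -
    have split: "group_union G (J \<union> I) = X \<union> (group_union G J - X)"
      unfolding X_def group_union_Un by auto
    show ?thesis
      unfolding split using fin by (intro sum.union_disjoint) auto
  qed
  moreover have "(\<Sum>i\<in>C. (z i)\<^sup>2) = (\<Sum>i\<in>C \<inter> X. (z i)\<^sup>2) + (\<Sum>i\<in>C - X. (z i)\<^sup>2)"
    using fin(1) by (rule sum.Int_Diff)
  moreover have "(\<Sum>i\<in>X. (z i)\<^sup>2) = (\<Sum>i\<in>C \<inter> X. (z i)\<^sup>2) + (\<Sum>i\<in>X - C. (z i)\<^sup>2)"
    using fin(2) by (subst sum.Int_Diff[of X _ C]) (auto simp: Int_commute)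
  ultimately show ?thesis
    unfolding C_def X_def by linarith
qed

text \<open>Swap the missed groups of \<open>I\<close> in for a few selected ones, chosen by
  \<open>exists_subfamily_room_small_loss\<close> to lose little mass; by \<open>proj_set_exchange\<close> the projection
  still does at least as well.\<close>

lemma proj_set_missed_mass_le:
  assumes grp: "\<forall>i<M. G i \<subseteq> {..<p}" and s: "s < k"
    and P: "P \<in> proj_set p G M k z" and K: "K \<subseteq> {..<M}" "card K \<le> k"
    and PK: "P = restr (group_union G K) z"
    and I: "I \<subseteq> {..<M}" "card I \<le> s"
  shows "(\<Sum>i\<in>group_union G I - group_union G K. (z i)\<^sup>2)
    \<le> real s / real (k - s) * (\<Sum>i\<in>group_union G K - group_union G I. (z i)\<^sup>2)"
proof -
  define c where "c = (\<lambda>i. if i \<notin> group_union G I then (z i)\<^sup>2 else 0)"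
  have sum_c: "sum c A = (\<Sum>i\<in>A - group_union G I. (z i)\<^sup>2)" if "finite A" for A
    unfolding c_def using that by (simp add: sum.inter_filter[symmetric] set_diff_eq)
  have fin: "finite (group_union G J)" if "J \<subseteq> {..<M}" for J
    using group_union_subset_lessThan[OF grp that] finite_subset by auto
  have "finite K" "\<And>i. 0 \<le> c i"
    using K(1) finite_subset unfolding c_def by auto
  then obtain K' where K': "K' \<subseteq> K" "card K' + s \<le> k"
    and loss: "sum c (group_union G K) - sum c (group_union G K')
      \<le> real s / real (k - s) * sum c (group_union G K)"
    using exists_subfamily_room_small_loss[where c = c, OF _ K(2) fin[OF K(1)] _ s] by blast
  have "card (K' \<union> I) \<le> k"
    using card_Un_le[of K' I] K'(2) I(2) by linarith
  with proj_set_exchange[OF grp P PK K(1) _ I(1)] have "(\<Sum>i\<in>group_union G I - group_union G K. (z i)\<^sup>2)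
      \<le> sum c (group_union G K) - sum c (group_union G K')"
    using K'(1) K(1) fin by (simp add: sum_c)
  with loss show ?thesis
    using K(1) fin by (simp add: sum_c)
qed

lemma restr_sub_squared_le:
  fixes \<eta> :: real
  assumes S: "C \<union> X \<subseteq> S" and w: "{i. w i \<noteq> 0} \<subseteq> X" and \<eta>: "0 < \<eta>"
  shows "(restr C z i - w i)\<^sup>2
    \<le> (1 + \<eta>) * (restr S (\<lambda>i. z i - w i) i)\<^sup>2 + (1 + 1 / \<eta>) * (restr (X - C) z i)\<^sup>2"
proof (cases "i \<in> C")
  case True
  then show ?thesis
    using S \<eta> by (auto simp: restr_def algebra_simps)
next
  case False
  show ?thesis
  proof (cases "i \<in> X")
    case True
    then show ?thesis
      using False S power2_add_le_weighted[OF \<eta>, of "w i - z i" "z i"]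
      by (auto simp: restr_def power2_commute)
  next
    case False
    then have "w i = 0"
      using w by auto
    with False \<open>i \<notin> C\<close> \<eta> show ?thesis
      by (simp add: restr_def)
  qed
qed

lemma restr_dist_le:
  fixes \<eta> \<rho> :: real
  assumes S: "C \<union> X \<subseteq> S" "S \<subseteq> {..<p}" and w: "{i. w i \<noteq> 0} \<subseteq> X"
    and \<eta>: "0 < \<eta>" and \<rho>: "0 \<le> \<rho>"
    and missed: "(\<Sum>i\<in>X - C. (z i)\<^sup>2) \<le> \<rho> * (\<Sum>i\<in>C - X. (z i)\<^sup>2)"
  shows "(\<Sum>i<p. (restr C z i - w i)\<^sup>2) \<le> (1 + \<eta> + (1 + 1 / \<eta>) * \<rho>) * (\<Sum>i\<in>S. (z i - w i)\<^sup>2)"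
proof -
  define d where "d = (\<Sum>i\<in>S. (z i - w i)\<^sup>2)"
  have fin: "finite S"
    using S(2) finite_subset by auto
  have missed_d: "(\<Sum>i\<in>X - C. (z i)\<^sup>2) \<le> \<rho> * d"
  proof -
    have "w i = 0" if "i \<notin> X" for i
      using that w by auto
    then have "(\<Sum>i\<in>C - X. (z i)\<^sup>2) = (\<Sum>i\<in>C - X. (z i - w i)\<^sup>2)"
      by (intro sum.cong) auto
    also have "\<dots> \<le> d"
      unfolding d_def using S(1) fin by (intro sum_mono2) auto
    finally show ?thesis
      using missed \<rho> by (meson mult_left_mono order_trans)
  qed
  have "(\<Sum>i<p. (restr C z i - w i)\<^sup>2) \<le> (\<Sum>i<p. (1 + \<eta>) * (restr S (\<lambda>i. z i - w i) i)\<^sup>2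
      + (1 + 1 / \<eta>) * (restr (X - C) z i)\<^sup>2)"
    by (rule sum_mono[OF restr_sub_squared_le[OF S(1) w \<eta>]])
  also have "\<dots> = (1 + \<eta>) * d + (1 + 1 / \<eta>) * (\<Sum>i\<in>X - C. (z i)\<^sup>2)"
    using S unfolding d_def
    by (simp add: sum.distrib sum_distrib_left[symmetric] sum_lessThan_restr_squared subset_iff)
  also have "\<dots> \<le> (1 + \<eta>) * d + (1 + 1 / \<eta>) * (\<rho> * d)"
    using missed_d \<eta> by (intro add_left_mono mult_left_mono) auto
  finally show ?thesis
    unfolding d_def by (simp add: algebra_simps)
qed

lemma proj_set_dist_le:
  fixes \<eta> :: real
  assumes grp: "\<forall>i<M. G i \<subseteq> {..<p}" and s: "s < k" and P: "P \<in> proj_set p G M k z"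
    and K: "K \<subseteq> {..<M}" "card K \<le> k" "{i. P i \<noteq> 0} \<subseteq> group_union G K"
    and I: "I \<subseteq> {..<M}" "card I \<le> s" "{i. w i \<noteq> 0} \<subseteq> group_union G I"
    and S: "group_union G K \<union> group_union G I \<subseteq> S" "S \<subseteq> {..<p}" and \<eta>: "0 < \<eta>"
  shows "(\<Sum>i<p. (P i - w i)\<^sup>2)
    \<le> (1 + \<eta> + (1 + 1 / \<eta>) * (real s / real (k - s))) * (\<Sum>i\<in>S. (z i - w i)\<^sup>2)"
proof -
  have PK: "P = restr (group_union G K) z"
    by (rule proj_set_eq_restr[OF grp P K])
  show ?thesis
    unfolding PK using \<eta>
    by (intro restr_dist_le[OF S I(3) _ _ proj_set_missed_mass_le[OF grp s P K(1,2) PK I(1,2)]]) auto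
qed

section \<open>One IHT step\<close>

lemma sparsity_ratio_le:
  fixes u :: real
  assumes u: "0 < u" "u \<le> 1" and s: "0 < s" and k: "73 * real s \<le> u\<^sup>2 * real k"
  shows "s < k" and "real s / real (k - s) \<le> u\<^sup>2 / 72"
proof -
  have "u\<^sup>2 \<le> 1"
    using u by (simp add: power_le_one)
  then have "u\<^sup>2 * real k \<le> real k"
    by (simp add: mult_left_le_one_le)
  then show sk: "s < k"
    using k s by linarith
  have "u\<^sup>2 * real s \<le> real s"
    using \<open>u\<^sup>2 \<le> 1\<close> by (simp add: mult_left_le_one_le)
  then have "72 * real s \<le> u\<^sup>2 * real (k - s)"
    using k sk by (simp add: of_nat_diff right_diff_distrib)
  then show "real s / real (k - s) \<le> u\<^sup>2 / 72"
    using sk by (simp add: field_simps)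
qed

text \<open>Where the constants come from, with \<open>u = \<alpha> / L\<close>: the weights \<open>u / 8\<close> and \<open>3 u / 8\<close> in
  the two applications of \<open>power2_add_le_weighted\<close>, and \<open>\<rho> = k\<^sup>* / (k - k\<^sup>*) \<le> u\<^sup>2 / 72\<close>,
  which \<open>k \<ge> 73 k\<^sup>* / u\<^sup>2\<close> guarantees.\<close>

lemma iht_step_constants:
  fixes u \<rho> :: real
  assumes u: "0 < u" "u \<le> 1"
  shows "(1 + u / 4) * (1 + 3 * u / 8) * (1 - u) \<le> 1 - u / 4"
    and "(1 + u / 4) * (1 + 1 / (3 * u / 8)) \<le> 5 / u"
    and "0 \<le> \<rho> \<Longrightarrow> \<rho> \<le> u\<^sup>2 / 72 \<Longrightarrow> 1 + u / 8 + (1 + 1 / (u / 8)) * \<rho> \<le> 1 + u / 4"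
proof -
  have "0 \<le> u * u" "0 \<le> u * u * u" "u * u \<le> 1"
    using u by (simp_all add: mult_le_one)
  moreover have "(1 + u / 4) * (1 + 3 * u / 8) * (1 - u)
      = 1 - u / 4 - u / 8 - u * u * (17 / 32) - u * u * u * (3 / 32)"
    by (simp add: field_simps)
  ultimately show "(1 + u / 4) * (1 + 3 * u / 8) * (1 - u) \<le> 1 - u / 4"
    using u by linarith
  have "5 / 3 \<le> 5 / (3 * u)" "u / 4 \<le> 1 / (4 * u)"
    using u \<open>u * u \<le> 1\<close> by (simp_all add: field_simps)
  moreover have "5 / (3 * u) + 1 / (4 * u) + 8 / (3 * u) \<le> 5 / u"
    using u by (simp add: field_simps)
  moreover have "(1 + u / 4) * (1 + 1 / (3 * u / 8)) = 5 / 3 + u / 4 + 8 / (3 * u)"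
    using u by (simp add: field_simps)
  ultimately show "(1 + u / 4) * (1 + 1 / (3 * u / 8)) \<le> 5 / u"
    by linarith
  assume \<rho>: "0 \<le> \<rho>" "\<rho> \<le> u\<^sup>2 / 72"
  have "(1 + 1 / (u / 8)) * \<rho> = (1 + 8 / u) * \<rho>"
    by simp
  also have "\<dots> \<le> (1 + 8 / u) * (u\<^sup>2 / 72)"
    using \<rho> u by (intro mult_left_mono) auto
  also have "\<dots> = (u * u + 8 * u) / 72"
    using u by (simp add: field_simps power2_eq_square)
  also have "\<dots> \<le> u / 8"
    using \<open>u * u \<le> 1\<close> u by (simp add: field_simps mult_left_le)
  finally show "1 + u / 8 + (1 + 1 / (u / 8)) * \<rho> \<le> 1 + u / 4"
    by simp
qed

lemma iht_step_arith:
  fixes u \<rho> E B a D :: real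
  assumes u: "0 < u" "u \<le> 1" and \<rho>: "0 \<le> \<rho>" "\<rho> \<le> u\<^sup>2 / 72"
    and nonneg: "0 \<le> E" "0 \<le> B" "0 \<le> a"
    and D: "D \<le> (1 + u / 8 + (1 + 1 / (u / 8)) * \<rho>) * a"
    and a: "a \<le> (1 + 3 * u / 8) * ((1 - u) * E) + (1 + 1 / (3 * u / 8)) * B"
  shows "D \<le> (1 - u / 4) * E + 5 * B / u"
proof -
  have "D \<le> (1 + u / 4) * a"
    using D mult_right_mono[OF iht_step_constants(3)[OF u \<rho>] nonneg(3)] by (rule order_trans)
  also have "\<dots> \<le> (1 + u / 4) * ((1 + 3 * u / 8) * ((1 - u) * E) + (1 + 1 / (3 * u / 8)) * B)"
    using a u by (intro mult_left_mono) auto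
  also have "\<dots> = ((1 + u / 4) * (1 + 3 * u / 8) * (1 - u)) * E + ((1 + u / 4) * (1 + 1 / (3 * u / 8))) * B"
    by (simp add: ring_distribs mult_ac)
  also have "\<dots> \<le> (1 - u / 4) * E + (5 / u) * B"
    using iht_step_constants(1,2)[OF u] nonneg(1,2) by (intro add_mono mult_right_mono)
  finally show ?thesis
    by simp
qed

lemma sum_group_union_Un3_le:
  fixes c :: "nat \<Rightarrow> real"
  assumes grp: "\<forall>i<M. G i \<subseteq> {..<p}" and c: "\<And>i. 0 \<le> c i"
    and b: "\<And>J. J \<subseteq> {..<M} \<Longrightarrow> card J \<le> k \<Longrightarrow> sum c (group_union G J) \<le> b"
    and J: "J1 \<subseteq> {..<M}" "card J1 \<le> k" "J2 \<subseteq> {..<M}" "card J2 \<le> k"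
      "J3 \<subseteq> {..<M}" "card J3 \<le> k"
  shows "sum c (group_union G (J1 \<union> J2 \<union> J3)) \<le> 3 * b"
proof -
  have fin: "finite (group_union G J)" if "J \<subseteq> {..<M}" for J
    using group_union_subset_lessThan[OF grp that] finite_subset by auto
  have "sum c (group_union G (J1 \<union> J2 \<union> J3))
      \<le> sum c (group_union G J1 \<union> group_union G J2) + sum c (group_union G J3)"
    unfolding group_union_Un using fin J c by (intro sum_Un_le) auto
  also have "\<dots> \<le> sum c (group_union G J1) + sum c (group_union G J2) + sum c (group_union G J3)"
    using fin J c by (intro add_right_mono sum_Un_le) auto
  also have "\<dots> \<le> 3 * b"
    using b[OF J(1,2)] b[OF J(3,4)] b[OF J(5,6)] by linarith
  finally show ?thesis .
qed

lemma iht_step: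
  assumes grp: "\<forall>i<M. G i \<subseteq> {..<p}" and cover: "(\<Union>i<M. G i) = {..<p}"
    and td: "twice_diff_grad_hess p f g H"
    and rs: "rsc_rss p G M H (2 * k + s) \<alpha> L" and \<alpha>: "0 < \<alpha>" "\<alpha> \<le> L"
    and s: "0 < s" "73 * real s \<le> (\<alpha> / L)\<^sup>2 * real k"
    and w: "w \<in> Rp p" "gnorm0 G M w \<le> s"
    and x: "x \<in> Rp p" "gnorm0 G M x \<le> k"
    and P: "P \<in> proj_set p G M k (\<lambda>i. x i - 1 / L * g x i)"
    and b: "\<And>J. J \<subseteq> {..<M} \<Longrightarrow> card J \<le> k \<Longrightarrow> (\<Sum>i\<in>group_union G J. (g w i)\<^sup>2) \<le> b"
  shows "(l2 p (\<lambda>i. P i - w i))\<^sup>2 \<le> (1 - \<alpha> / L / 4) * (l2 p (\<lambda>i. x i - w i))\<^sup>2 + 15 * b / (\<alpha> * L)"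
proof -
  define u where "u = \<alpha> / L"
  define z where "z = (\<lambda>i. x i - 1 / L * g x i)"
  have L: "0 < L" and u: "0 < u" "u \<le> 1"
    using \<alpha> unfolding u_def by auto
  have "P \<in> Rp p" "gnorm0 G M P \<le> k"
    using P unfolding proj_set_def by auto
  obtain K Kx Kw where K: "K \<subseteq> {..<M}" "card K \<le> k" "{i. P i \<noteq> 0} \<subseteq> group_union G K"
    and Kx: "Kx \<subseteq> {..<M}" "card Kx \<le> k" "{i. x i \<noteq> 0} \<subseteq> group_union G Kx"
    and Kw: "Kw \<subseteq> {..<M}" "card Kw \<le> s" "{i. w i \<noteq> 0} \<subseteq> group_union G Kw"
    using gnorm0_obtain_cover[OF cover \<open>P \<in> Rp p\<close>] gnorm0_obtain_cover[OF cover x(1)]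
      gnorm0_obtain_cover[OF cover w(1)] \<open>gnorm0 G M P \<le> k\<close> x(2) w(2) by metis
  define I where "I = K \<union> Kx \<union> Kw"
  have I: "I \<subseteq> {..<M}" "card I \<le> 2 * k + s"
    using K Kx Kw card_Un_le[of "K \<union> Kx" Kw] card_Un_le[of K Kx] unfolding I_def by auto
  have S: "group_union G I \<subseteq> {..<p}"
    by (rule group_union_subset_lessThan[OF grp I(1)])
  have "s < k" and \<rho>: "real s / real (k - s) \<le> u\<^sup>2 / 72"
    using sparsity_ratio_le[OF u s(1)] s(2) unfolding u_def by auto
  have "group_union G K \<union> group_union G Kw \<subseteq> group_union G I"
    unfolding I_def group_union_Un by auto
  from proj_set_dist_le[OF grp \<open>s < k\<close> P[folded z_def] K Kw this S, of "u / 8"]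
  have dist: "(\<Sum>i<p. (P i - w i)\<^sup>2) \<le> (1 + u / 8 + (1 + 1 / (u / 8)) * (real s / real (k - s)))
      * (\<Sum>i\<in>group_union G I. (z i - w i)\<^sup>2)"
    using u by simp
  have "card Kw \<le> k"
    using Kw(2) \<open>s < k\<close> by simp
  have gw: "(\<Sum>i\<in>group_union G I. (g w i)\<^sup>2) \<le> 3 * b"
    unfolding I_def
    by (rule sum_group_union_Un3_le[OF grp _ _ K(1,2) Kx(1,2) Kw(1) \<open>card Kw \<le> k\<close>]) (simp_all add: b)
  have "{i. x i \<noteq> 0} \<subseteq> group_union G I" "{i. w i \<noteq> 0} \<subseteq> group_union G I"
    using Kx(3) Kw(3) unfolding I_def group_union_Un by auto
  from gradient_step_error[OF td rs I \<alpha>(1) L S x(1) w(1) this _ gw, of "3 * u / 8"]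
  have grad: "(\<Sum>i\<in>group_union G I. (z i - w i)\<^sup>2)
      \<le> (1 + 3 * u / 8) * ((1 - u) * (\<Sum>i<p. (x i - w i)\<^sup>2)) + (1 + 1 / (3 * u / 8)) * (3 * b / L\<^sup>2)"
    using u unfolding z_def u_def by simp
  have "0 \<le> b"
    using b[of "{}"] by (simp add: group_union_def)
  then have "(\<Sum>i<p. (P i - w i)\<^sup>2) \<le> (1 - u / 4) * (\<Sum>i<p. (x i - w i)\<^sup>2) + 5 * (3 * b / L\<^sup>2) / u"
    by (intro iht_step_arith[OF u _ \<rho> _ _ _ dist grad]) (auto simp: sum_nonneg)
  then show ?thesis
    using L \<alpha> unfolding l2_squared u_def by (simp add: field_simps power2_eq_square)
qed

section \<open>Iterating\<close>

lemma iht_iterates_sparse: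
  assumes "ws 0 = (\<lambda>_. 0)" "\<And>t. ws (Suc t) \<in> proj_set p G M k (z t)"
  shows "ws t \<in> Rp p \<and> gnorm0 G M (ws t) \<le> k"
proof (cases t)
  case 0
  have "gnorm0 G M (\<lambda>_::nat. 0::real) \<le> k"
    using gnorm0_le_card[of "{}" M "\<lambda>_::nat. 0::real" G] by simp
  then show ?thesis
    using assms(1) 0 unfolding Rp_def by simp
next
  case (Suc t')
  then show ?thesis
    using assms(2)[of t'] unfolding proj_set_def by auto
qed

lemma linear_recurrence_le:
  fixes d :: "nat \<Rightarrow> real"
  assumes step: "\<And>t. d (Suc t) \<le> c * d t + B" and c: "0 \<le> c" "c < 1" and B: "0 \<le> B"
  shows "d t \<le> B / (1 - c) + c ^ t * d 0"
proof (induction t)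
  case 0
  then show ?case
    using B c by simp
next
  case (Suc t)
  have "d (Suc t) \<le> c * (B / (1 - c) + c ^ t * d 0) + B"
    using step[of t] Suc c(1) by (meson add_right_mono mult_left_mono order_trans)
  also have "\<dots> = (c * (B / (1 - c)) + B) + c ^ Suc t * d 0"
    by (simp add: algebra_simps)
  also have "c * (B / (1 - c)) + B = B / (1 - c)"
    using c by (simp add: divide_simps) (simp add: algebra_simps)
  finally show ?case .
qed

lemma iht_linear_convergence:
  assumes grp: "\<forall>i<M. G i \<subseteq> {..<p}" and cover: "(\<Union>i<M. G i) = {..<p}"
    and td: "twice_diff_grad_hess p f g H"
    and rs: "rsc_rss p G M H (2 * k + s) \<alpha> L" and \<alpha>: "0 < \<alpha>" "\<alpha> \<le> L"
    and s: "0 < s" "73 * real s \<le> (\<alpha> / L)\<^sup>2 * real k"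
    and w: "w \<in> Rp p" "gnorm0 G M w \<le> s"
    and ws0: "ws 0 = (\<lambda>_. 0)"
    and wsS: "\<And>t. ws (Suc t) \<in> proj_set p G M k (\<lambda>i. ws t i - 1 / L * g (ws t) i)"
    and b: "\<And>J. J \<subseteq> {..<M} \<Longrightarrow> card J \<le> k \<Longrightarrow> (\<Sum>i\<in>group_union G J. (g w i)\<^sup>2) \<le> b"
  shows "(l2 p (\<lambda>i. ws t i - w i))\<^sup>2 \<le> 60 * b / \<alpha>\<^sup>2 + (1 - \<alpha> / L / 4) ^ t * (l2 p w)\<^sup>2"
proof -
  define d where "d = (\<lambda>t. (l2 p (\<lambda>i. ws t i - w i))\<^sup>2)"
  have "d (Suc t) \<le> (1 - \<alpha> / L / 4) * d t + 15 * b / (\<alpha> * L)" for t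
    unfolding d_def
    by (rule iht_step[OF grp cover td rs \<alpha> s w _ _ wsS[of t]]) (use iht_iterates_sparse[OF ws0 wsS] b in auto)
  moreover have "0 \<le> b"
    using b[of "{}"] by (simp add: group_union_def)
  ultimately have "d t \<le> 15 * b / (\<alpha> * L) / (1 - (1 - \<alpha> / L / 4)) + (1 - \<alpha> / L / 4) ^ t * d 0"
    using \<alpha> by (intro linear_recurrence_le) auto
  moreover have "15 * b / (\<alpha> * L) / (1 - (1 - \<alpha> / L / 4)) = 60 * b / \<alpha>\<^sup>2"
    using \<alpha> by (simp add: field_simps power2_eq_square)
  moreover have "d 0 = (l2 p w)\<^sup>2"
    unfolding d_def ws0 l2_squared by simp
  ultimately show ?thesis
    unfolding d_def by simp
qed

lemma power2_mult_exp_le_1: "0 \<le> (x::real) \<Longrightarrow> x\<^sup>2 * exp (- 2 * x) \<le> 1"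
proof -
  assume x: "0 \<le> x"
  have "x \<le> exp x"
    using exp_ge_add_one_self[of x] by linarith
  then have "x\<^sup>2 \<le> (exp x)\<^sup>2"
    using x by (rule power_mono)
  also have "\<dots> = exp (2 * x)"
    by (simp add: power2_eq_square exp_add[symmetric])
  finally have "x\<^sup>2 * exp (- 2 * x) \<le> exp (2 * x) * exp (- 2 * x)"
    by (rule mult_right_mono) simp
  also have "\<dots> = 1"
    by (simp add: exp_add[symmetric])
  finally show ?thesis .
qed

lemma geometric_decay_le:
  fixes u R \<epsilon> :: real
  assumes u: "0 < u" "u \<le> 4" and \<epsilon>: "0 < \<epsilon>" and R: "0 \<le> R" and T: "8 / u * (R / \<epsilon>) \<le> T"
  shows "(1 - u / 4) ^ T * R\<^sup>2 \<le> \<epsilon>\<^sup>2"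
proof -
  have "(1 - u / 4) ^ T \<le> exp (- (u / 4)) ^ T"
    using u exp_ge_add_one_self[of "- (u / 4)"] by (intro power_mono) auto
  also have "\<dots> = exp (- (u / 4) * T)"
    by (simp add: exp_of_nat_mult[symmetric] mult.commute)
  also have "\<dots> \<le> exp (- 2 * (R / \<epsilon>))"
    using mult_left_mono[OF T, of "u / 4"] u by simp
  finally have "(1 - u / 4) ^ T * R\<^sup>2 \<le> exp (- 2 * (R / \<epsilon>)) * R\<^sup>2"
    by (intro mult_right_mono) auto
  also have "\<dots> = \<epsilon>\<^sup>2 * ((R / \<epsilon>)\<^sup>2 * exp (- 2 * (R / \<epsilon>)))"
    using \<epsilon> by (simp add: field_simps power2_eq_square)
  also have "\<dots> \<le> \<epsilon>\<^sup>2"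
    using power2_mult_exp_le_1[of "R / \<epsilon>"] R \<epsilon> by (simp add: mult_left_le)
  finally show ?thesis .
qed

lemma Max_l2_restr:
  fixes p k M :: nat and G :: "nat \<Rightarrow> nat set" and v :: "nat \<Rightarrow> real"
  defines "\<Gamma> \<equiv> Max {l2 p (restr S v) | S. S \<subseteq> {..<p} \<and> gsupp_card G M S \<le> k}"
  assumes grp: "\<forall>i<M. G i \<subseteq> {..<p}"
  shows "0 \<le> \<Gamma>"
    and "J \<subseteq> {..<M} \<Longrightarrow> card J \<le> k \<Longrightarrow> (\<Sum>i\<in>group_union G J. (v i)\<^sup>2) \<le> \<Gamma>\<^sup>2"
proof -
  let ?A = "{l2 p (restr S v) | S. S \<subseteq> {..<p} \<and> gsupp_card G M S \<le> k}"
  have fin: "finite ?A"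
    by (rule finite_subset[of _ "(\<lambda>S. l2 p (restr S v)) ` Pow {..<p}"]) auto
  have le: "l2 p (restr S v) \<le> \<Gamma>" if "S \<subseteq> {..<p}" "gsupp_card G M S \<le> k" for S
    unfolding \<Gamma>_def using that by (intro Max_ge[OF fin]) auto
  show "0 \<le> \<Gamma>"
    using le[of "{}"] l2_nonneg[of p "restr {} v"] gsupp_card_empty[of G M] by simp
  show "(\<Sum>i\<in>group_union G J. (v i)\<^sup>2) \<le> \<Gamma>\<^sup>2" if J: "J \<subseteq> {..<M}" "card J \<le> k"
  proof -
    have S: "group_union G J \<subseteq> {..<p}"
      by (rule group_union_subset_lessThan[OF grp J(1)])
    moreover have "gsupp_card G M (group_union G J) \<le> k"
      using gsupp_card_le_card[OF J(1) order_refl] J(2) by (rule le_trans)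
    ultimately have "(l2 p (restr (group_union G J) v))\<^sup>2 \<le> \<Gamma>\<^sup>2"
      by (intro power_mono le l2_nonneg)
    then show ?thesis
      unfolding l2_squared sum_lessThan_restr_squared[OF S] .
  qed
qed

lemma le_add_of_power2_le:
  fixes a x y :: real
  assumes "0 \<le> x" "0 \<le> y" "a\<^sup>2 \<le> x\<^sup>2 + 60 * y\<^sup>2"
  shows "a \<le> x + 20 * y"
proof -
  have "x\<^sup>2 + 60 * y\<^sup>2 \<le> (x + 20 * y)\<^sup>2"
    using assms(1,2) by (simp add: power2_eq_square algebra_simps)
  then show ?thesis
    using assms power2_le_imp_le[of a "x + 20 * y"] by simp
qed

lemma iht_error_bound:
  fixes L \<alpha> \<epsilon> :: real and T :: nat
  assumes grp: "\<forall>i<M. G i \<subseteq> {..<p}" and cover: "(\<Union>i<M. G i) = {..<p}"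
    and td: "twice_diff_grad_hess p f g H" and ks: "0 < kstar"
    and wstar: "wstar \<in> Rp p" "gnorm0 G M wstar \<le> kstar"
    and k: "73 * (L / \<alpha>)\<^sup>2 * real kstar \<le> real k"
    and \<alpha>: "0 < \<alpha>" and rs: "rsc_rss p G M H (2 * k + kstar) \<alpha> L"
    and ws0: "ws 0 = (\<lambda>_. 0)"
    and wsS: "\<And>t. ws (Suc t) \<in> proj_set p G M k (\<lambda>i. ws t i - (1 / L) * g (ws t) i)"
    and \<epsilon>: "0 < \<epsilon>" and T: "8 * (L / \<alpha>) * (l2 p wstar / \<epsilon>) \<le> real T"
  defines "\<Gamma> \<equiv> Max {l2 p (restr S (g wstar)) | S. S \<subseteq> {..<p} \<and> gsupp_card G M S \<le> k}"
  shows "l2 p (\<lambda>i. ws T i - wstar i) \<le> \<epsilon> + 10 * L / \<alpha> * (2 / L * \<Gamma>)"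
proof (cases "p = 0")
  case True
  have "0 \<le> 10 * L / \<alpha> * (2 / L * \<Gamma>)"
    using Max_l2_restr(1)[OF grp, where k = k and v = "g wstar", folded \<Gamma>_def] \<alpha>
    by (cases "L = 0") (simp_all add: zero_le_mult_iff)
  then show ?thesis
    using True \<epsilon> by (simp add: l2_def)
next
  case False
  then have L: "0 < L" "\<alpha> \<le> L"
    using rsc_rss_le_constants[OF _ rs] \<alpha> by auto
  define u where "u = \<alpha> / L"
  have u: "0 < u" "u \<le> 1"
    using \<alpha> L unfolding u_def by auto
  have "73 * real kstar \<le> (\<alpha> / L)\<^sup>2 * real k"
    using k \<alpha> L by (simp add: field_simps power2_eq_square)
  then have "(l2 p (\<lambda>i. ws T i - wstar i))\<^sup>2 \<le> 60 * \<Gamma>\<^sup>2 / \<alpha>\<^sup>2 + (1 - u / 4) ^ T * (l2 p wstar)\<^sup>2"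
    unfolding u_def
    by (rule iht_linear_convergence[OF grp cover td rs \<alpha> L(2) ks _ wstar ws0 wsS])
      (rule Max_l2_restr(2)[OF grp, where k = k and v = "g wstar", folded \<Gamma>_def])
  also have "(1 - u / 4) ^ T * (l2 p wstar)\<^sup>2 \<le> \<epsilon>\<^sup>2"
    using T u \<epsilon> unfolding u_def by (intro geometric_decay_le[OF u(1)[unfolded u_def] _ \<epsilon> l2_nonneg]) auto
  finally have "l2 p (\<lambda>i. ws T i - wstar i) \<le> \<epsilon> + 20 * (\<Gamma> / \<alpha>)"
    using \<epsilon> \<alpha> Max_l2_restr(1)[OF grp, where k = k and v = "g wstar", folded \<Gamma>_def]
    by (intro le_add_of_power2_le) (auto simp: power_divide)
  then show ?thesis
    using L \<alpha> by (simp add: field_simps)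
qed

theorem theorem3:
  "\<exists>C1>0. \<exists>C2>0. \<forall>(p::nat) (G::nat \<Rightarrow> nat set) (M::nat)
      (f::(nat \<Rightarrow> real) \<Rightarrow> real) g H (kstar::nat) (k::nat) wstar \<alpha> L
      (ws::nat \<Rightarrow> nat \<Rightarrow> real) (\<epsilon>::real) (T::nat).
     (\<forall>i<M. G i \<subseteq> {..<p}) \<and> (\<Union>i<M. G i) = {..<p} \<and>
     twice_diff_grad_hess p f g H \<and>
     0 < kstar \<and>
     wstar \<in> Rp p \<and> gnorm0 G M wstar \<le> kstar \<and>
     (\<forall>u\<in>Rp p. gnorm0 G M u \<le> kstar \<longrightarrow> f wstar \<le> f u) \<and>
     real k \<ge> C1 * (L / \<alpha>)\<^sup>2 * real kstar \<and>
     0 < \<alpha> \<and> rsc_rss p G M H (2 * k + kstar) \<alpha> L \<and>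
     ws 0 = (\<lambda>_. 0) \<and>
     (\<forall>t. ws (Suc t) \<in> proj_set p G M k (\<lambda>i. ws t i - (1 / L) * g (ws t) i)) \<and>
     0 < \<epsilon> \<and> real T \<ge> C2 * (L / \<alpha>) * (l2 p wstar / \<epsilon>)
     \<longrightarrow> l2 p (\<lambda>i. ws T i - wstar i)
           \<le> \<epsilon> + 10 * L / \<alpha> *
              (2 / L * Max {l2 p (restr S (g wstar)) | S. S \<subseteq> {..<p} \<and> gsupp_card G M S \<le> k})"
  by (intro exI[of _ 73] exI[of _ 8] conjI allI impI; (elim conjE)?; (rule iht_error_bound)?) simp_all

end
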